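(* Let $p$ be an odd prime and $n=2p^d+p^e$, where $d$ and $e$ are distinct nonnegative integers. (1) If $p=3$ and $n=5$, then $c_{3,0}(5)=6$, $c_{3,1}(5)=8$, and $c_{3,2}(5)=2$. (2) If $p=3$ and $n>5$, then $c_{3,0}(n)=6\cdot2^{n-5}$ and $c_{3,1}(n)=c_{3,-1}(n)=5\cdot 2^{n-5}$. (3) If $p>3$, then $c_{p,0}(n)=6\cdot2^{n-5}$, $c_{p,\pm1}(n)=4\cdot 2^{n-5}$, $c_{p,\pm2}(n)=2^{n-5}$, and $c_{p,i}(n)=0$ for all $i\not\equiv0,\pm1,\pm2\pmod p$.
   Context: For a permutation $w$ of $[n]$, $D(w)=\{i\in[n-1]: w(i)>w(i+1)\}$. A composition $\alpha=(\alpha_1,\ldots,\alpha_\ell)$ of $n$ (written $\alpha\models n$) is a sequence of positive integers with sum $n$, with descent set $D(\alpha)=\{\alpha_1,\alpha_1+\alpha_2,\ldots,\alpha_1+\cdots+\alpha_{\ell-1}\}$. The ribbon number is $r_\alpha=|\{w\in\mathfrak{S}_n: D(w)=D(\alpha)\}|$, and for $i\in\mathbb{Z}_p$, $c_{p,i}(n)=|\{\alpha\models n: r_\alpha\equiv i\pmod p\}|$. *)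

theory Defs
  imports "HOL-Combinatorics.Permutations" "HOL-Number_Theory.Cong"
begin

definition perm_descents :: "nat \<Rightarrow> (nat \<Rightarrow> nat) \<Rightarrow> nat set" where
  "perm_descents n w = {i \<in> {1..<n}. w i > w (Suc i)}"

definition compositions :: "nat \<Rightarrow> nat list set" where
  "compositions n = {\<alpha>. (\<forall>a \<in> set \<alpha>. 0 < a) \<and> sum_list \<alpha> = n}"

definition comp_descents :: "nat list \<Rightarrow> nat set" where
  "comp_descents \<alpha> = {sum_list (take k \<alpha>) | k. 1 \<le> k \<and> k < length \<alpha>}"

definition ribbon :: "nat list \<Rightarrow> nat" where
  "ribbon \<alpha> = card {w. w permutes {1..sum_list \<alpha>} \<and>
      perm_descents (sum_list \<alpha>) w = comp_descents \<alpha>}"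

definition c_count :: "nat \<Rightarrow> int \<Rightarrow> nat \<Rightarrow> nat" where
  "c_count p i n = card {\<alpha> \<in> compositions n. [int (ribbon \<alpha>) = i] (mod int p)}"

end

(* The permutations of [m] whose descents lie in T are counted by the multinomial
   coefficient beta_m(T), so by inclusion-exclusion (-1)^|D| r_D is the alternating sum
   S_m(D) = sum over T subset of D of (-1)^|T| beta_m(T), and removing the largest element of T
   gives S_m(D) = 1 - sum over t in D, 0 < t < m, of C(m,t) S_t(D).  Modulo p one has
   C(p^k + b, t) = C(b,t) + C(b, t - p^k), so for m = 2P + Q with P = p^d and Q = p^e the
   recursion only passes through P, Q, 2P and P + Q, and (-1)^|D| r_D is congruent to a value
   G(D) that only depends on which of P, 2P, Q, P + Q lie in D.  Compositions of n correspond to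
   the subsets D of [n-1]; the remaining n - 5 elements of D only change the sign, and both signs
   occur for half of their subsets, so the counts follow from the 16 values of G. *)

theory Submission
  imports Defs "HOL-Combinatorics.Multiset_Permutations"
begin

section \<open>Sums and counts over power sets\<close>

lemma sum_Pow_insert:
  assumes "finite A" "x \<notin> A"
  shows "(\<Sum>E\<in>Pow (insert x A). f E) = (\<Sum>E\<in>Pow A. f E) + (\<Sum>E\<in>Pow A. f (insert x E))"
proof -
  have "inj_on (insert x) (Pow A)" using assms(2) by (auto simp: inj_on_def)
  moreover have "Pow A \<inter> insert x ` Pow A = {}" using assms(2) by auto
  ultimately show ?thesis
    using assms(1) by (simp add: Pow_insert sum.union_disjoint sum.reindex)
qed

lemma sum_Pow_nonempty_by_Max:
  fixes A :: "'a::linorder set"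
  assumes "finite A"
  shows "(\<Sum>T\<in>Pow A - {{}}. F T) = (\<Sum>t\<in>A. \<Sum>T\<in>Pow {a\<in>A. a < t}. F (insert t T))"
proof -
  have "(\<Sum>T\<in>Pow A - {{}}. F T) = (\<Sum>(t, T)\<in>(SIGMA t:A. Pow {a\<in>A. a < t}). F (insert t T))"
  proof (rule sum.reindex_bij_witness[where i = "\<lambda>(t, T). insert t T" and j = "\<lambda>T. (Max T, T - {Max T})"])
    fix T assume T: "T \<in> Pow A - {{}}"
    then have "finite T" using assms finite_subset by auto
    with T show "(\<lambda>(t, T). insert t T) (Max T, T - {Max T}) = T"
      by (auto simp: insert_absorb)
    from \<open>finite T\<close> T have "Max T \<in> A" using Max_in[of T] by blast
    with \<open>finite T\<close> T show "(Max T, T - {Max T}) \<in> (SIGMA t:A. Pow {a\<in>A. a < t})"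
      by (auto simp: less_le)
    from \<open>finite T\<close> T show "(case (Max T, T - {Max T}) of (t, T) \<Rightarrow> F (insert t T)) = F T"
      by (simp add: insert_absorb)
  next
    fix p assume "p \<in> (SIGMA t:A. Pow {a\<in>A. a < t})"
    then obtain t T where p: "p = (t, T)" "t \<in> A" "T \<subseteq> {a\<in>A. a < t}" by blast
    then have "finite T" using assms by (auto intro: finite_subset)
    with p have "Max (insert t T) = t" by (auto intro!: Max_eqI)
    with p show "(\<lambda>T. (Max T, T - {Max T})) ((\<lambda>(t, T). insert t T) p) = p" by auto
    from p show "(\<lambda>(t, T). insert t T) p \<in> Pow A - {{}}" by auto
  qed
  also have "\<dots> = (\<Sum>t\<in>A. \<Sum>T\<in>Pow {a\<in>A. a < t}. F (insert t T))"
    using assms by (intro sum.Sigma[symmetric]) auto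
  finally show ?thesis .
qed

lemma card_Pow_Un_filter:
  assumes "finite X" "finite Y" "X \<inter> Y = {}"
  shows "card {D \<in> Pow (X \<union> Y). P D} = (\<Sum>E\<in>Pow X. card {R \<in> Pow Y. P (E \<union> R)})"
proof -
  let ?S = "SIGMA E:Pow X. {R \<in> Pow Y. P (E \<union> R)}"
  have "{D \<in> Pow (X \<union> Y). P D} = (\<lambda>(E, R). E \<union> R) ` ?S"
  proof (intro equalityI subsetI)
    fix D assume "D \<in> {D \<in> Pow (X \<union> Y). P D}"
    then have D: "(D \<inter> X) \<union> (D \<inter> Y) = D" "P D" by auto
    then have "(D \<inter> X, D \<inter> Y) \<in> ?S" by simp
    with D(1) show "D \<in> (\<lambda>(E, R). E \<union> R) ` ?S" by (metis (no_types, lifting) case_prod_conv image_eqI)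
  qed auto
  moreover have "inj_on (\<lambda>(E, R). E \<union> R) ?S"
    using assms(3) by (auto simp: inj_on_def; blast)
  ultimately show ?thesis
    using assms by (simp add: card_image card_SigmaI)
qed

lemma card_Pow_filter_parity:
  assumes "finite Y" "Y \<noteq> {}"
  shows "card {R \<in> Pow Y. P (even (card R))} = 2 ^ (card Y - 1) * (of_bool (P True) + of_bool (P False))"
proof -
  let ?E = "{R \<in> Pow Y. even (card R)}" and ?O = "{R \<in> Pow Y. odd (card R)}"
  have "?E \<union> ?O = Pow Y" "?E \<inter> ?O = {}" by auto
  then have "card ?E + card ?O = 2 ^ card Y"
    using assms(1) card_Un_disjoint[of ?E ?O] by (simp add: card_Pow)
  moreover have "card ?E = card ?O"
    using card_subsupersets_even_odd[of Y "{}"] assms by (simp add: Pow_def psubset_eq)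
  moreover have "(2::nat) ^ card Y = 2 * 2 ^ (card Y - 1)"
    using assms by (cases "card Y") simp_all
  ultimately have half: "card ?E = 2 ^ (card Y - 1)" "card ?O = 2 ^ (card Y - 1)"
    by linarith+
  have "{R \<in> Pow Y. P (even (card R))} = {R \<in> ?E. P True} \<union> {R \<in> ?O. P False}"
    by (auto; metis (full_types))
  moreover have "card ({R \<in> ?E. P True} \<union> {R \<in> ?O. P False}) = card {R \<in> ?E. P True} + card {R \<in> ?O. P False}"
    using assms(1) by (intro card_Un_disjoint) auto
  ultimately have "card {R \<in> Pow Y. P (even (card R))} = card {R \<in> ?E. P True} + card {R \<in> ?O. P False}"
    by simp
  then show ?thesis using half by (cases "P True"; cases "P False") simp_all
qed

lemma card_Pow_sign_filter:
  fixes g i m :: int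
  assumes "finite Y" "Y \<noteq> {}" "finite E" "E \<inter> Y = {}"
  shows "card {R \<in> Pow Y. [(-1) ^ card (E \<union> R) * g = i] (mod m)}
    = 2 ^ (card Y - 1) * (of_bool ([g = i] (mod m)) + of_bool ([- g = i] (mod m)))"
proof -
  have "(-1::int) ^ card (E \<union> R) = (-1) ^ card E * (if even (card R) then 1 else -1)" if "R \<in> Pow Y" for R
  proof -
    have "card (E \<union> R) = card E + card R"
      using that assms finite_subset by (intro card_Un_disjoint) auto
    then show ?thesis by (simp add: power_add minus_one_power_iff)
  qed
  then have "{R \<in> Pow Y. [(-1) ^ card (E \<union> R) * g = i] (mod m)}
      = {R \<in> Pow Y. [(-1) ^ card E * (if even (card R) then 1 else -1) * g = i] (mod m)}"
    by auto
  then show ?thesis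
    using card_Pow_filter_parity[OF assms(1,2), of "\<lambda>b. [(-1) ^ card E * (if b then 1 else -1) * g = i] (mod m)"]
    by (cases "even (card E)") simp_all
qed

section \<open>Descents of lists and permutations\<close>

definition list_descents :: "'a::linorder list \<Rightarrow> nat set" where
  "list_descents xs = {i \<in> {1..<length xs}. xs ! (i - 1) > xs ! i}"

lemma perm_descents_eq_list_descents:
  "perm_descents n w = list_descents (map w [1..<Suc n])"
  unfolding perm_descents_def list_descents_def by (auto simp del: upt_Suc)

lemma list_descents_subset: "list_descents xs \<subseteq> {1..<length xs}"
  unfolding list_descents_def by auto

lemma list_descents_take: "list_descents (take t xs) = list_descents xs \<inter> {..<t}"
  unfolding list_descents_def by auto

lemma list_descents_drop: "list_descents (drop t xs) = {i. 0 < i \<and> t + i \<in> list_descents xs}"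
  unfolding list_descents_def by (rule set_eqI) (simp, auto)

lemma list_descents_empty_iff_sorted: "list_descents xs = {} \<longleftrightarrow> sorted xs"
proof
  assume "list_descents xs = {}"
  then have "xs ! i \<le> xs ! Suc i" if "Suc i < length xs" for i
    using that unfolding list_descents_def by force
  then show "sorted xs" by (simp add: sorted_iff_nth_Suc)
next
  assume "sorted xs"
  then show "list_descents xs = {}"
    unfolding list_descents_def by (auto simp: not_less intro: sorted_nth_mono)
qed

lemma list_descents_subset_iff_split:
  assumes "t \<in> T" and "\<And>j. j \<in> T \<Longrightarrow> j < length xs \<Longrightarrow> j \<le> t"
  shows "list_descents xs \<subseteq> T \<longleftrightarrow> list_descents (take t xs) \<subseteq> T \<and> sorted (drop t xs)"
proof
  assume desc: "list_descents xs \<subseteq> T"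
  have "list_descents (drop t xs) = {}"
    using desc assms(2) list_descents_subset[of xs] by (fastforce simp: list_descents_drop)
  with desc show "list_descents (take t xs) \<subseteq> T \<and> sorted (drop t xs)"
    by (auto simp: list_descents_take list_descents_empty_iff_sorted)
next
  assume "list_descents (take t xs) \<subseteq> T \<and> sorted (drop t xs)"
  then have "list_descents xs \<inter> {..<t} \<subseteq> T" and "list_descents (drop t xs) = {}"
    by (simp_all add: list_descents_take list_descents_empty_iff_sorted)
  then have "i \<in> T" if "i \<in> list_descents xs" for i
    using that \<open>t \<in> T\<close> unfolding list_descents_drop
    by (cases i t rule: linorder_cases) (auto dest: spec[of _ "i - t"])
  then show "list_descents xs \<subseteq> T" by blast
qed

lemma sorted_list_of_set_set: "sorted xs \<Longrightarrow> distinct xs \<Longrightarrow> sorted_list_of_set (set xs) = xs"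
  by (simp add: sorted_list_of_set_sort_remdups distinct_remdups_id sorted_sort_id)

lemma bij_betw_permutes_lists:
  "bij_betw (\<lambda>w. map w [1..<Suc n]) {w. w permutes {1..n}} (permutations_of_set {1..n})"
proof -
  let ?f = "\<lambda>w. map w [1..<Suc n]"
  have inj: "inj_on ?f {w. w permutes {1..n}}"
  proof (rule inj_onI, rule ext)
    fix w v x assume w: "w \<in> {w. w permutes {1..n}}" and v: "v \<in> {w. w permutes {1..n}}"
      and eq: "?f w = ?f v"
    show "w x = v x"
    proof (cases "x \<in> {1..n}")
      case True
      then show ?thesis using eq by auto
    next
      case False
      then show ?thesis using w v by (simp add: permutes_not_in)
    qed
  qed
  have sub: "?f ` {w. w permutes {1..n}} \<subseteq> permutations_of_set {1..n}"
  proof clarify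
    fix w assume w: "w permutes {1..n}"
    have "distinct (?f w)"
      using permutes_inj_on[OF w] by (simp add: distinct_map atLeastLessThanSuc_atLeastAtMost del: upt_Suc)
    moreover have "set (?f w) = {1..n}"
      using permutes_image[OF w] by (simp add: atLeastLessThanSuc_atLeastAtMost del: upt_Suc)
    ultimately show "?f w \<in> permutations_of_set {1..n}" by (simp add: permutations_of_set_def)
  qed
  have "card (?f ` {w. w permutes {1..n}}) = card (permutations_of_set {1..n})"
    using card_image[OF inj] card_permutations[of "{1..n}" n] by simp
  then have "?f ` {w. w permutes {1..n}} = permutations_of_set {1..n}"
    using sub by (intro card_subset_eq) auto
  with inj show ?thesis unfolding bij_betw_def ..
qed

section \<open>Permutations whose descents lie in a given set\<close>

text \<open>For \<open>T \<inter> {1..<m} = {t\<^sub>1 < \<dots> < t\<^sub>k}\<close> this is the multinomial coefficient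
  \<open>m! / (t\<^sub>1! (t\<^sub>2 - t\<^sub>1)! \<cdots> (m - t\<^sub>k)!)\<close>, written \<open>\<beta>\<^sub>m(T)\<close> in the paper.\<close>

function desc_multinomial :: "nat \<Rightarrow> nat set \<Rightarrow> nat" where
  "desc_multinomial m T =
     (if T \<inter> {1..<m} = {} then 1
      else (m choose Max (T \<inter> {1..<m})) * desc_multinomial (Max (T \<inter> {1..<m})) T)"
  by auto
termination
proof (relation "measure fst")
  fix m :: nat and T :: "nat set"
  assume "T \<inter> {1..<m} \<noteq> {}"
  then have "Max (T \<inter> {1..<m}) \<in> T \<inter> {1..<m}" by (intro Max_in) auto
  then show "((Max (T \<inter> {1..<m}), T), m, T) \<in> measure fst" by auto
qed auto

declare desc_multinomial.simps [simp del]

lemma desc_multinomial_empty: "T \<inter> {1..<m} = {} \<Longrightarrow> desc_multinomial m T = 1"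
  by (subst desc_multinomial.simps) simp

lemma desc_multinomial_Max:
  assumes "T \<inter> {1..<m} \<noteq> {}"
  shows "desc_multinomial m T = (m choose Max (T \<inter> {1..<m})) * desc_multinomial (Max (T \<inter> {1..<m})) T"
  using assms by (subst desc_multinomial.simps) simp

lemma desc_multinomial_cong:
  "T \<inter> {1..<m} = T' \<inter> {1..<m} \<Longrightarrow> desc_multinomial m T = desc_multinomial m T'"
proof (induction m T rule: desc_multinomial.induct)
  case (1 m T)
  show ?case
  proof (cases "T \<inter> {1..<m} = {}")
    case True
    then show ?thesis using "1.prems" by (simp add: desc_multinomial_empty)
  next
    case False
    define t where "t = Max (T \<inter> {1..<m})"
    have "t \<in> T \<inter> {1..<m}" unfolding t_def using False by (intro Max_in) auto
    then have sub: "{1..<m} \<inter> {1..<t} = {1..<t}" by auto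
    have "T \<inter> {1..<t} = T' \<inter> {1..<t}"
      using arg_cong[OF "1.prems", of "\<lambda>A. A \<inter> {1..<t}"] by (simp only: Int_assoc sub)
    then have "desc_multinomial t T = desc_multinomial t T'" using "1.IH"[OF False] by (simp add: t_def)
    moreover have "T' \<inter> {1..<m} \<noteq> {}" using False "1.prems" by simp
    ultimately show ?thesis
      using desc_multinomial_Max[OF False] desc_multinomial_Max[of T' m] "1.prems" by (simp add: t_def)
  qed
qed

lemma desc_multinomial_insert:
  assumes "t \<in> {1..<m}" and "T \<subseteq> {1..<t}"
  shows "desc_multinomial m (insert t T) = (m choose t) * desc_multinomial t T"
proof -
  have "insert t T \<inter> {1..<m} = insert t T" and "Max (insert t T) = t"
    using assms by (auto intro!: Max_eqI finite_subset[OF _ finite_atLeastLessThan])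
  then have "desc_multinomial m (insert t T) = (m choose t) * desc_multinomial t (insert t T)"
    using desc_multinomial_Max[of "insert t T" m] by simp
  also have "desc_multinomial t (insert t T) = desc_multinomial t T"
    by (rule desc_multinomial_cong) auto
  finally show ?thesis .
qed

definition desc_lists :: "'a::linorder set \<Rightarrow> nat set \<Rightarrow> 'a list set" where
  "desc_lists S T = {xs \<in> permutations_of_set S. list_descents xs \<subseteq> T}"

lemma length_desc_lists: "xs \<in> desc_lists S T \<Longrightarrow> length xs = card S"
  using distinct_card[of xs] by (simp add: desc_lists_def permutations_of_set_def)

lemma desc_lists_no_descent:
  assumes "finite S" and "T \<inter> {1..<card S} = {}"
  shows "desc_lists S T = {sorted_list_of_set S}"
proof (intro equalityI subsetI)
  fix xs assume xs: "xs \<in> desc_lists S T"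
  then have "list_descents xs \<subseteq> T \<inter> {1..<card S}"
    using list_descents_subset[of xs] length_desc_lists[OF xs] by (auto simp: desc_lists_def)
  with assms(2) have "list_descents xs = {}" by blast
  with xs have "sorted xs" "distinct xs" "set xs = S"
    by (simp_all add: desc_lists_def permutations_of_set_def list_descents_empty_iff_sorted)
  then show "xs \<in> {sorted_list_of_set S}" using sorted_list_of_set_set[of xs] by simp
next
  fix xs assume "xs \<in> {sorted_list_of_set S}"
  moreover have "list_descents (sorted_list_of_set S) = {}"
    by (simp add: list_descents_empty_iff_sorted)
  ultimately show "xs \<in> desc_lists S T"
    using assms(1) by (simp add: desc_lists_def permutations_of_set_def)
qed

text \<open>If \<open>t\<close> is the largest admissible descent position, the entries after position \<open>t\<close>
  increase, so they are determined by the set \<open>Z\<close> they form.\<close>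

lemma bij_betw_desc_lists_split:
  assumes S: "finite S" and t: "t \<in> T" "t < card S"
    and last: "\<And>j. j \<in> T \<Longrightarrow> j < card S \<Longrightarrow> j \<le> t"
  shows "bij_betw (\<lambda>xs. (set (drop t xs), take t xs)) (desc_lists S T)
    (SIGMA Z:{Z. Z \<subseteq> S \<and> card Z = card S - t}. desc_lists (S - Z) T)"
proof -
  define Zs where "Zs = {Z. Z \<subseteq> S \<and> card Z = card S - t}"
  have split: "list_descents xs \<subseteq> T \<longleftrightarrow> list_descents (take t xs) \<subseteq> T \<and> sorted (drop t xs)"
    if "length xs = card S" for xs
    by (rule list_descents_subset_iff_split[OF t(1)]) (simp add: last that)
  have fin_Z: "finite Z" if "Z \<in> Zs" for Z
    using that S finite_subset by (auto simp: Zs_def)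
  have len_ys: "length ys = t" if "Z \<in> Zs" "ys \<in> desc_lists (S - Z) T" for Z ys
    using that length_desc_lists[OF that(2)] t card_Diff_subset[OF fin_Z[OF that(1)]] by (simp add: Zs_def)
  have inv_left: "take t xs @ sorted_list_of_set (set (drop t xs)) = xs" if "xs \<in> desc_lists S T" for xs
  proof -
    have "sorted (drop t xs)" "distinct (drop t xs)"
      using that split length_desc_lists[OF that] by (auto simp: desc_lists_def permutations_of_set_def)
    then show ?thesis by (simp add: sorted_list_of_set_set)
  qed
  have maps_to: "(set (drop t xs), take t xs) \<in> (SIGMA Z:Zs. desc_lists (S - Z) T)"
    if "xs \<in> desc_lists S T" for xs
  proof -
    have dist: "distinct (take t xs @ drop t xs)" and set_xs: "set (take t xs @ drop t xs) = S"
      using that by (simp_all add: desc_lists_def permutations_of_set_def)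
    then have "set (drop t xs) \<in> Zs"
      using length_desc_lists[OF that] distinct_card[of "drop t xs"]
      by (auto simp: Zs_def dest: in_set_dropD)
    moreover have "take t xs \<in> desc_lists (S - set (drop t xs)) T"
      using dist set_xs split length_desc_lists[OF that] that
      by (auto simp: desc_lists_def permutations_of_set_def simp del: append_take_drop_id)
    ultimately show ?thesis by blast
  qed
  have maps_from: "ys @ sorted_list_of_set Z \<in> desc_lists S T"
    if "Z \<in> Zs" "ys \<in> desc_lists (S - Z) T" for Z ys
  proof -
    have "Z \<subseteq> S" "card Z = card S - t" using that(1) by (simp_all add: Zs_def)
    then show ?thesis
      using that len_ys[OF that] fin_Z[OF that(1)] split[of "ys @ sorted_list_of_set Z"] t
      by (auto simp: desc_lists_def permutations_of_set_def)
  qed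
  let ?cut = "\<lambda>xs. (set (drop t xs), take t xs)" and ?glue = "\<lambda>(Z, ys). ys @ sorted_list_of_set Z"
  have "bij_betw ?cut (desc_lists S T) (SIGMA Z:Zs. desc_lists (S - Z) T)"
  proof (rule bij_betw_byWitness[where f' = ?glue])
    show "\<forall>xs\<in>desc_lists S T. ?glue (?cut xs) = xs" using inv_left by simp
    show "\<forall>p\<in>(SIGMA Z:Zs. desc_lists (S - Z) T). ?cut (?glue p) = p" using len_ys fin_Z by fastforce
    show "?cut ` desc_lists S T \<subseteq> (SIGMA Z:Zs. desc_lists (S - Z) T)" using maps_to by blast
    show "?glue ` (SIGMA Z:Zs. desc_lists (S - Z) T) \<subseteq> desc_lists S T" using maps_from by auto
  qed
  then show ?thesis by (simp add: Zs_def)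
qed

lemma card_desc_lists:
  assumes "finite S"
  shows "card (desc_lists S T) = desc_multinomial (card S) T"
  using assms
proof (induction "card S" arbitrary: S rule: less_induct)
  case less
  define m where "m = card S"
  show ?case
  proof (cases "T \<inter> {1..<m} = {}")
    case True
    then show ?thesis
      using desc_lists_no_descent[OF less.prems] by (simp add: m_def desc_multinomial_empty)
  next
    case False
    define t where "t = Max (T \<inter> {1..<m})"
    have t: "t \<in> T" "1 \<le> t" "t < m"
      using Max_in[of "T \<inter> {1..<m}"] False by (auto simp: t_def)
    have last: "j \<le> t" if "j \<in> T" "j < m" for j
      using that t unfolding t_def by (cases "j = 0") (auto intro: Max_ge)
    define Zs where "Zs = {Z. Z \<subseteq> S \<and> card Z = m - t}"
    have "card (desc_lists S T) = card (SIGMA Z:Zs. desc_lists (S - Z) T)"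
      using bij_betw_desc_lists_split[OF less.prems t(1)] t last
      by (auto simp: m_def Zs_def intro: bij_betw_same_card)
    also have "\<dots> = (\<Sum>Z\<in>Zs. card (desc_lists (S - Z) T))"
      using less.prems by (intro card_SigmaI) (auto simp: Zs_def desc_lists_def)
    also have "\<dots> = (\<Sum>Z\<in>Zs. desc_multinomial t T)"
    proof (rule sum.cong[OF refl])
      fix Z assume "Z \<in> Zs"
      then have "card (S - Z) = t"
        using t card_Diff_subset[of Z S] less.prems finite_subset by (auto simp: Zs_def m_def)
      then show "card (desc_lists (S - Z) T) = desc_multinomial t T"
        using less.hyps less.prems t by (auto simp: m_def)
    qed
    also have "\<dots> = (m choose t) * desc_multinomial t T"
      using n_subsets[OF less.prems] t binomial_symmetric[of t m] by (simp add: Zs_def m_def)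
    also have "\<dots> = desc_multinomial m T"
      using desc_multinomial_Max[OF False] by (simp add: t_def)
    finally show ?thesis by (simp add: m_def)
  qed
qed

lemma card_permutes_descents_subset:
  "card {w. w permutes {1..n} \<and> perm_descents n w \<subseteq> T} = desc_multinomial n T"
proof -
  have "bij_betw (\<lambda>w. map w [1..<Suc n]) {w \<in> {w. w permutes {1..n}}. perm_descents n w \<subseteq> T}
      (desc_lists {1..n} T)"
    unfolding desc_lists_def
    by (rule bij_betw_Collect[OF bij_betw_permutes_lists]) (simp add: perm_descents_eq_list_descents)
  then show ?thesis
    using card_desc_lists[of "{1..n}" T] by (simp add: bij_betw_same_card)
qed

section \<open>Ribbon numbers by inclusion-exclusion\<close>

definition desc_count :: "nat \<Rightarrow> nat set \<Rightarrow> nat" where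
  "desc_count n D = card {w. w permutes {1..n} \<and> perm_descents n w = D}"

lemma ribbon_eq_desc_count: "ribbon \<alpha> = desc_count (sum_list \<alpha>) (comp_descents \<alpha>)"
  by (simp add: ribbon_def desc_count_def)

lemma desc_multinomial_eq_sum_desc_count:
  assumes "finite T"
  shows "desc_multinomial n T = (\<Sum>U\<in>Pow T. desc_count n U)"
proof -
  have "{w. w permutes {1..n} \<and> perm_descents n w \<subseteq> T}
      = (\<Union>U\<in>Pow T. {w. w permutes {1..n} \<and> perm_descents n w = U})"
    by auto
  then have "desc_multinomial n T = card (\<Union>U\<in>Pow T. {w. w permutes {1..n} \<and> perm_descents n w = U})"
    using card_permutes_descents_subset[of n T] by simp
  also have "\<dots> = (\<Sum>U\<in>Pow T. desc_count n U)"
    unfolding desc_count_def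
  proof (rule card_UN_disjoint)
    show "\<forall>U\<in>Pow T. finite {w. w permutes {1..n} \<and> perm_descents n w = U}"
      using finite_permutations[of "{1..n}"] by (auto elim: finite_subset[rotated])
  qed (use assms in auto)
  finally show ?thesis .
qed

lemma signed_desc_count:
  assumes "finite D"
  shows "(-1) ^ card D * int (desc_count n D) = (\<Sum>T\<in>Pow D. (-1) ^ card T * int (desc_multinomial n T))"
proof (rule inclusion_exclusion_symmetric[OF _ assms])
  fix S :: "nat set" assume "finite S"
  then show "int (desc_multinomial n S) = (\<Sum>T\<in>Pow S. (-1) ^ card T * ((-1) ^ card T * int (desc_count n T)))"
    by (simp add: desc_multinomial_eq_sum_desc_count flip: mult.assoc power_add mult_2)
qed

definition alt_multinomial_sum :: "nat \<Rightarrow> nat set \<Rightarrow> int" where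
  "alt_multinomial_sum m D = (\<Sum>T\<in>Pow (D \<inter> {1..<m}). (-1) ^ card T * int (desc_multinomial m T))"

lemma signed_desc_count_eq_alt_multinomial_sum:
  "D \<subseteq> {1..<n} \<Longrightarrow> (-1) ^ card D * int (desc_count n D) = alt_multinomial_sum n D"
  by (simp add: signed_desc_count alt_multinomial_sum_def Int_absorb2 finite_subset)

lemma alt_multinomial_sum_rec:
  "alt_multinomial_sum m D = 1 - (\<Sum>t\<in>D \<inter> {1..<m}. int (m choose t) * alt_multinomial_sum t D)"
proof -
  define A where "A = D \<inter> {1..<m}"
  define F where "F T = (-1::int) ^ card T * int (desc_multinomial m T)" for T
  have "alt_multinomial_sum m D = F {} + (\<Sum>T\<in>Pow A - {{}}. F T)"
    unfolding alt_multinomial_sum_def A_def[symmetric] F_def by (rule sum.remove) (auto simp: A_def)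
  also have "F {} = 1" by (simp add: F_def desc_multinomial_empty)
  also have "(\<Sum>T\<in>Pow A - {{}}. F T) = (\<Sum>t\<in>A. \<Sum>T\<in>Pow {a\<in>A. a < t}. F (insert t T))"
    by (rule sum_Pow_nonempty_by_Max) (simp add: A_def)
  also have "\<dots> = (\<Sum>t\<in>A. - (int (m choose t) * alt_multinomial_sum t D))"
  proof (rule sum.cong[OF refl])
    fix t assume t: "t \<in> A"
    then have A_below: "{a\<in>A. a < t} = D \<inter> {1..<t}" by (auto simp: A_def)
    have "F (insert t T) = - (int (m choose t) * ((-1) ^ card T * int (desc_multinomial t T)))"
      if "T \<subseteq> D \<inter> {1..<t}" for T
    proof -
      have "finite T" "t \<notin> T" using that finite_subset by auto
      then show ?thesis
        using that t desc_multinomial_insert[of t m T] by (simp add: F_def A_def)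
    qed
    then show "(\<Sum>T\<in>Pow {a\<in>A. a < t}. F (insert t T)) = - (int (m choose t) * alt_multinomial_sum t D)"
      by (simp add: A_below alt_multinomial_sum_def sum_distrib_left sum_negf)
  qed
  finally show ?thesis by (simp add: A_def sum_negf)
qed

section \<open>Binomial coefficients modulo a prime\<close>

lemma prime_dvd_binomial_prime_power:
  fixes p :: nat
  assumes p: "prime p" and i: "0 < i" "i < p ^ k"
  shows "p dvd (p ^ k choose i)"
proof (rule ccontr)
  assume "\<not> p dvd (p ^ k choose i)"
  then have "coprime (p ^ k) (p ^ k choose i)"
    using prime_imp_coprime[OF p] by simp
  moreover have "p ^ k dvd i * (p ^ k choose i)"
    using times_binomial_minus1_eq[OF i(1), of "p ^ k"] by simp
  ultimately have "p ^ k dvd i" by (simp add: coprime_dvd_mult_left_iff)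
  with i show False by (simp add: dvd_imp_le leD)
qed

lemma binomial_prime_power_add_cong:
  fixes p :: nat
  assumes p: "prime p"
  shows "[(p ^ k + b) choose t = (b choose t) + (if p ^ k \<le> t then b choose (t - p ^ k) else 0)] (mod p)"
proof -
  define Q where "Q = p ^ k"
  have "Q \<noteq> 0" using p by (simp add: Q_def prime_gt_0_nat)
  have "(Q + b) choose t = (\<Sum>j\<le>t. (Q choose j) * (b choose (t - j)))"
    by (rule vandermonde[symmetric])
  also have "[\<dots> = (\<Sum>j\<le>t. (if j = 0 then b choose t else 0) + (if j = Q then b choose (t - Q) else 0))] (mod p)"
  proof (rule cong_sum)
    fix j
    consider "j = 0" | "j = Q" | "0 < j" "j < Q" | "Q < j" by linarith
    then show "[(Q choose j) * (b choose (t - j))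
        = (if j = 0 then b choose t else 0) + (if j = Q then b choose (t - Q) else 0)] (mod p)"
    proof cases
      case 3
      then have "p dvd (Q choose j)" unfolding Q_def by (rule prime_dvd_binomial_prime_power[OF p])
      with 3 show ?thesis by (simp add: cong_0_iff)
    qed (use \<open>Q \<noteq> 0\<close> in \<open>simp_all add: binomial_eq_0\<close>)
  qed
  also have "(\<Sum>j\<le>t. (if j = 0 then b choose t else 0) + (if j = Q then b choose (t - Q) else 0))
      = (b choose t) + (if Q \<le> t then b choose (t - Q) else 0)"
    by (simp add: sum.distrib)
  finally show ?thesis unfolding Q_def .
qed

primrec subset_sums :: "nat list \<Rightarrow> nat list" where
  "subset_sums [] = [0]"
| "subset_sums (q # qs) = subset_sums qs @ map ((+) q) (subset_sums qs)"

lemma count_list_map_add: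
  fixes c t :: nat
  shows "count_list (map ((+) c) xs) t = (if c \<le> t then count_list xs (t - c) else 0)"
proof (induction xs)
  case (Cons a xs)
  then show ?case by (cases "c \<le> t") auto
qed simp

lemma binomial_cong_count_subset_sums:
  fixes p :: nat
  assumes p: "prime p" and powers: "\<forall>q\<in>set qs. \<exists>k. q = p ^ k"
  shows "[sum_list qs choose t = count_list (subset_sums qs) t] (mod p)"
  using powers
proof (induction qs arbitrary: t)
  case Nil
  show ?case by (cases t) simp_all
next
  case (Cons q qs)
  obtain k where q: "q = p ^ k" using Cons.prems by auto
  have "[sum_list (q # qs) choose t
      = (sum_list qs choose t) + (if q \<le> t then sum_list qs choose (t - q) else 0)] (mod p)"
    unfolding q sum_list.Cons by (rule binomial_prime_power_add_cong[OF p])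
  also have "[(sum_list qs choose t) + (if q \<le> t then sum_list qs choose (t - q) else 0)
      = count_list (subset_sums qs) t + (if q \<le> t then count_list (subset_sums qs) (t - q) else 0)] (mod p)"
    using Cons by (intro cong_add) auto
  also have "count_list (subset_sums qs) t + (if q \<le> t then count_list (subset_sums qs) (t - q) else 0)
      = count_list (subset_sums (q # qs)) t"
    by (simp add: count_list_map_add)
  finally show ?case .
qed

section \<open>Ribbon numbers modulo p\<close>

lemma sum_count_list_eq_sum_list_filter:
  fixes f :: "'a \<Rightarrow> 'b::comm_semiring_1"
  assumes "finite A"
  shows "(\<Sum>t\<in>A. of_nat (count_list xs t) * f t) = sum_list (map f (filter (\<lambda>x. x \<in> A) xs))"
proof (induction xs)
  case (Cons a xs)
  have "(\<Sum>t\<in>A. of_nat (count_list (a # xs) t) * f t)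
      = (\<Sum>t\<in>A. of_nat (count_list xs t) * f t) + (\<Sum>t\<in>A. if a = t then f t else 0)"
    by (auto simp: sum.distrib[symmetric] algebra_simps intro!: sum.cong)
  with Cons assms show ?case by (simp add: sum.delta add.commute)
qed simp

lemma cong_sum_list_map:
  "(\<And>x. x \<in> set xs \<Longrightarrow> [f x = g x] (mod m)) \<Longrightarrow> [sum_list (map f xs) = sum_list (map g xs)] (mod m)"
  by (induction xs) (auto intro: cong_add)

lemma alt_multinomial_sum_cong:
  fixes p :: nat
  assumes binom: "\<And>t. [m choose t = count_list xs t] (mod p)"
    and known: "\<And>x. x \<in> set xs \<Longrightarrow> x \<in> D \<inter> {1..<m} \<Longrightarrow> [alt_multinomial_sum x D = v x] (mod int p)"
  shows "[alt_multinomial_sum m D = 1 - sum_list (map v (filter (\<lambda>x. x \<in> D \<inter> {1..<m}) xs))] (mod int p)"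
proof -
  have "[(\<Sum>t\<in>D \<inter> {1..<m}. int (m choose t) * alt_multinomial_sum t D)
      = (\<Sum>t\<in>D \<inter> {1..<m}. int (count_list xs t) * alt_multinomial_sum t D)] (mod int p)"
    using binom by (intro cong_sum cong_mult cong_refl) (simp add: cong_int_iff)
  also have "(\<Sum>t\<in>D \<inter> {1..<m}. int (count_list xs t) * alt_multinomial_sum t D)
      = sum_list (map (\<lambda>x. alt_multinomial_sum x D) (filter (\<lambda>x. x \<in> D \<inter> {1..<m}) xs))"
    by (rule sum_count_list_eq_sum_list_filter) simp
  also have "[\<dots> = sum_list (map v (filter (\<lambda>x. x \<in> D \<inter> {1..<m}) xs))] (mod int p)"
    using known by (intro cong_sum_list_map) auto
  finally show ?thesis
    by (subst alt_multinomial_sum_rec) (intro cong_diff cong_refl)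
qed

lemma alt_multinomial_sum_cong_subset_sums:
  fixes p :: nat
  assumes "prime p" and "\<forall>q\<in>set qs. \<exists>k. q = p ^ k"
    and "\<And>x. x \<in> set (subset_sums qs) \<Longrightarrow> x \<in> D \<inter> {1..<sum_list qs} \<Longrightarrow>
      [alt_multinomial_sum x D = v x] (mod int p)"
  shows "[alt_multinomial_sum (sum_list qs) D
      = 1 - (\<Sum>x\<leftarrow>subset_sums qs. if x \<in> D \<inter> {1..<sum_list qs} then v x else 0)] (mod int p)"
  using alt_multinomial_sum_cong[OF binomial_cong_count_subset_sums] assms
  by (simp add: sum_list_map_filter')

lemma alt_multinomial_sum_prime_power_cong:
  fixes p :: nat
  assumes "prime p"
  shows "[alt_multinomial_sum (p ^ k) D = 1] (mod int p)"
  using alt_multinomial_sum_cong_subset_sums[OF assms, of "[p ^ k]" D "\<lambda>_. 1"] by auto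

lemma alt_multinomial_sum_two_prime_powers_cong:
  fixes p :: nat
  assumes p: "prime p"
  shows "[alt_multinomial_sum (p ^ d + p ^ e) D = 1 - of_bool (p ^ d \<in> D) - of_bool (p ^ e \<in> D)] (mod int p)"
proof -
  have "[alt_multinomial_sum (sum_list [p ^ d, p ^ e]) D
      = 1 - (\<Sum>x\<leftarrow>subset_sums [p ^ d, p ^ e].
               if x \<in> D \<inter> {1..<sum_list [p ^ d, p ^ e]} then 1 else 0)] (mod int p)"
    by (rule alt_multinomial_sum_cong_subset_sums[OF p])
      (auto intro: alt_multinomial_sum_prime_power_cong[OF p])
  moreover have "0 < p ^ d" "0 < p ^ e" using p by (simp_all add: prime_gt_0_nat)
  ultimately show ?thesis by (simp split: if_splits)
qed

text \<open>The value of the recursion \<open>alt_multinomial_sum_rec\<close> for \<open>m = 2P + Q\<close> modulo \<open>p\<close>,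
  given the values \<open>1\<close> at \<open>P\<close> and \<open>Q\<close>, \<open>1 - [P \<in> D] - [Q \<in> D]\<close> at \<open>P + Q\<close> and
  \<open>1 - 2 [P \<in> D]\<close> at \<open>2P\<close>.\<close>

definition signed_ribbon_residue :: "nat \<Rightarrow> nat \<Rightarrow> nat set \<Rightarrow> int" where
  "signed_ribbon_residue P Q D = 1 - 2 * of_bool (P \<in> D) - of_bool (Q \<in> D)
     - 2 * of_bool (P + Q \<in> D) * (1 - of_bool (P \<in> D) - of_bool (Q \<in> D))
     - of_bool (2 * P \<in> D) * (1 - 2 * of_bool (P \<in> D))"

lemma alt_multinomial_sum_partial_sum_cong:
  fixes p d e :: nat
  defines "P \<equiv> p ^ d" and "Q \<equiv> p ^ e"
  assumes p: "prime p" "odd p" and x: "x \<in> {P, Q, P + Q, 2 * P}"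
  shows "[alt_multinomial_sum x D = (if x = P + Q then 1 - of_bool (P \<in> D) - of_bool (Q \<in> D)
    else if x = 2 * P then 1 - 2 * of_bool (P \<in> D) else 1)] (mod int p)"
proof -
  have pos: "0 < P" "0 < Q" using p by (simp_all add: P_def Q_def prime_gt_0_nat)
  have "odd Q" using p by (simp add: Q_def)
  then have "Q \<noteq> 2 * P" by auto
  have "[alt_multinomial_sum P D = 1] (mod int p)" "[alt_multinomial_sum Q D = 1] (mod int p)"
    unfolding P_def Q_def by (rule alt_multinomial_sum_prime_power_cong[OF p(1)])+
  moreover have "[alt_multinomial_sum (P + Q) D = 1 - of_bool (P \<in> D) - of_bool (Q \<in> D)] (mod int p)"
    unfolding P_def Q_def by (rule alt_multinomial_sum_two_prime_powers_cong[OF p(1)])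
  moreover have "[alt_multinomial_sum (2 * P) D = 1 - 2 * of_bool (P \<in> D)] (mod int p)"
    using alt_multinomial_sum_two_prime_powers_cong[OF p(1), of d d D]
    unfolding P_def by (simp only: mult_2 diff_diff_eq)
  ultimately show ?thesis
    using x pos \<open>Q \<noteq> 2 * P\<close> by (cases "x = P + Q") auto
qed

lemma alt_multinomial_sum_residue_cong:
  fixes p :: nat
  assumes p: "prime p" "odd p"
  shows "[alt_multinomial_sum (2 * p ^ d + p ^ e) D = signed_ribbon_residue (p ^ d) (p ^ e) D] (mod int p)"
proof -
  define P Q where "P = p ^ d" and "Q = p ^ e"
  have pos: "0 < P" "0 < Q" using p by (simp_all add: P_def Q_def prime_gt_0_nat)
  have "odd Q" using p by (simp add: Q_def)
  then have "Q \<noteq> 2 * P" by auto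
  define v :: "nat \<Rightarrow> int" where "v x = (if x = P + Q then 1 - of_bool (P \<in> D) - of_bool (Q \<in> D)
      else if x = 2 * P then 1 - 2 * of_bool (P \<in> D) else 1)" for x
  have "[alt_multinomial_sum (sum_list [P, P, Q]) D
      = 1 - (\<Sum>x\<leftarrow>subset_sums [P, P, Q].
               if x \<in> D \<inter> {1..<sum_list [P, P, Q]} then v x else 0)] (mod int p)"
  proof (rule alt_multinomial_sum_cong_subset_sums[OF p(1)])
    show "\<forall>q\<in>set [P, P, Q]. \<exists>k. q = p ^ k" by (auto simp: P_def Q_def)
    fix x assume "x \<in> set (subset_sums [P, P, Q])" "x \<in> D \<inter> {1..<sum_list [P, P, Q]}"
    then have "x \<in> {P, Q, P + Q, 2 * P}" by (auto simp: mult_2)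
    then show "[alt_multinomial_sum x D = v x] (mod int p)"
      unfolding v_def P_def Q_def by (rule alt_multinomial_sum_partial_sum_cong[OF p])
  qed
  moreover have "P + P = 2 * P" "P + (P + Q) = 2 * P + Q" by simp_all
  ultimately show ?thesis
    using pos \<open>Q \<noteq> 2 * P\<close>
    by (simp add: signed_ribbon_residue_def v_def P_def[symmetric] Q_def[symmetric] split: if_splits)
qed

lemma signed_ribbon_residue_cong:
  "(\<And>x. x \<in> {P, 2 * P, Q, P + Q} \<Longrightarrow> x \<in> D \<longleftrightarrow> x \<in> D') \<Longrightarrow>
    signed_ribbon_residue P Q D = signed_ribbon_residue P Q D'"
  by (simp add: signed_ribbon_residue_def)

lemma sum_Pow_signed_ribbon_residue:
  fixes h :: "int \<Rightarrow> nat"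
  assumes "0 < P" "0 < Q" "P \<noteq> Q" "Q \<noteq> 2 * P"
  shows "(\<Sum>E\<in>Pow {P, 2 * P, Q, P + Q}. h (signed_ribbon_residue P Q E))
    = 6 * h 0 + 2 * h 1 + 6 * h (-1) + 2 * h (-2)"
  using assms by (simp add: sum_Pow_insert signed_ribbon_residue_def)

section \<open>Compositions and their descent sets\<close>

lemma comp_descents_Nil: "comp_descents [] = {}"
  and comp_descents_single: "comp_descents [a] = {}"
  by (simp_all add: comp_descents_def)

lemma comp_descents_Cons:
  assumes "xs \<noteq> []"
  shows "comp_descents (a # xs) = insert a ((+) a ` comp_descents xs)"
proof (intro equalityI subsetI)
  fix s assume "s \<in> comp_descents (a # xs)"
  then obtain k where k: "s = sum_list (take k (a # xs))" "1 \<le> k" "k < Suc (length xs)"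
    unfolding comp_descents_def by auto
  show "s \<in> insert a ((+) a ` comp_descents xs)"
  proof (cases "k = 1")
    case False
    with k obtain j where "k = Suc j" "1 \<le> j" "j < length xs" by (cases k) auto
    with k show ?thesis unfolding comp_descents_def by auto
  qed (use k in simp)
next
  fix s assume "s \<in> insert a ((+) a ` comp_descents xs)"
  then consider "s = a" | j where "s = a + sum_list (take j xs)" "1 \<le> j" "j < length xs"
    unfolding comp_descents_def by auto
  then show "s \<in> comp_descents (a # xs)"
  proof cases
    case 1
    then have "s = sum_list (take 1 (a # xs))" by simp
    with assms show ?thesis unfolding comp_descents_def by fastforce
  next
    case 2
    then have "s = sum_list (take (Suc j) (a # xs))" by simp
    with 2 show ?thesis unfolding comp_descents_def by fastforce
  qed
qed

lemma comp_descents_Cons_eq_empty_iff: "comp_descents (a # xs) = {} \<longleftrightarrow> xs = []"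
  by (cases xs) (simp_all add: comp_descents_single comp_descents_Cons)

lemma comp_descents_subset:
  assumes "\<alpha> \<in> compositions n"
  shows "comp_descents \<alpha> \<subseteq> {1..<n}"
proof
  fix s assume "s \<in> comp_descents \<alpha>"
  then obtain k where k: "s = sum_list (take k \<alpha>)" "1 \<le> k" "k < length \<alpha>"
    unfolding comp_descents_def by blast
  have pos: "\<forall>a\<in>set \<alpha>. 0 < a" and sum: "sum_list (take k \<alpha>) + sum_list (drop k \<alpha>) = n"
    using assms unfolding compositions_def by (auto simp flip: sum_list_append)
  have mem: "\<alpha> ! 0 \<in> set (take k \<alpha>)" "\<alpha> ! k \<in> set (drop k \<alpha>)"
    using k by (auto simp: in_set_conv_nth intro!: exI[of _ 0])
  then have "\<alpha> ! 0 \<le> sum_list (take k \<alpha>)" "\<alpha> ! k \<le> sum_list (drop k \<alpha>)"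
    by (simp_all add: member_le_sum_list)
  moreover have "0 < \<alpha> ! 0" "0 < \<alpha> ! k" using pos mem by (auto dest: in_set_takeD in_set_dropD)
  ultimately show "s \<in> {1..<n}" using k sum by auto
qed

lemma inj_on_comp_descents: "inj_on comp_descents (compositions n)"
proof (intro inj_onI)
  show "\<alpha> = \<beta>" if "\<alpha> \<in> compositions n" "\<beta> \<in> compositions n" "comp_descents \<alpha> = comp_descents \<beta>"
    for \<alpha> \<beta>
    using that
  proof (induction \<alpha> arbitrary: n \<beta>)
    case Nil
    then show ?case by (cases \<beta>) (auto simp: compositions_def)
  next
    case (Cons a \<alpha>')
    obtain b \<beta>' where \<beta>: "\<beta> = b # \<beta>'"
      using Cons.prems by (cases \<beta>) (auto simp: compositions_def)
    have a: "\<alpha>' \<in> compositions (n - a)" and b: "\<beta>' \<in> compositions (n - b)"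
      using Cons.prems by (auto simp: compositions_def \<beta>)
    show ?case
    proof (cases "\<alpha>' = [] \<or> \<beta>' = []")
      case True
      then have "\<alpha>' = [] \<and> \<beta>' = []"
        using Cons.prems(3) comp_descents_Cons_eq_empty_iff by (metis \<beta>)
      then show ?thesis using Cons.prems by (simp add: \<beta> compositions_def)
    next
      case False
      then have eq: "insert a ((+) a ` comp_descents \<alpha>') = insert b ((+) b ` comp_descents \<beta>')"
        using Cons.prems(3) by (simp add: \<beta> comp_descents_Cons)
      have pos: "0 \<notin> comp_descents \<alpha>'" "0 \<notin> comp_descents \<beta>'"
        using comp_descents_subset[OF a] comp_descents_subset[OF b] by auto
      have "a \<in> insert b ((+) b ` comp_descents \<beta>')" "b \<in> insert a ((+) a ` comp_descents \<alpha>')"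
        using eq by blast+
      then have "b \<le> a" "a \<le> b" by auto
      then have "a = b" by simp
      moreover have "a \<notin> (+) a ` comp_descents \<alpha>'" "a \<notin> (+) a ` comp_descents \<beta>'"
        using pos by auto
      ultimately have "(+) a ` comp_descents \<alpha>' = (+) a ` comp_descents \<beta>'"
        using eq by (metis insert_ident)
      then have "comp_descents \<alpha>' = comp_descents \<beta>'"
        by (simp add: inj_image_eq_iff)
      with Cons.IH[OF a] b \<open>a = b\<close> show ?thesis by (simp add: \<beta>)
    qed
  qed
qed

lemma comp_descents_surj:
  assumes "D \<subseteq> {1..<n}"
  shows "\<exists>\<alpha>\<in>compositions n. comp_descents \<alpha> = D"
  using assms
proof (induction n arbitrary: D rule: less_induct)
  case (less n)
  show ?case
  proof (cases "D = {}")
    case True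
    have "(if n = 0 then [] else [n]) \<in> compositions n" by (simp add: compositions_def)
    with True show ?thesis by (metis comp_descents_Nil comp_descents_single)
  next
    case False
    have "finite D" using less.prems finite_subset by blast
    define m where "m = Min D"
    have m: "m \<in> D" "\<And>x. x \<in> D \<Longrightarrow> m \<le> x"
      using \<open>finite D\<close> False by (simp_all add: m_def)
    then have m_range: "1 \<le> m" "m < n" using less.prems by auto
    define D' where "D' = (\<lambda>x. x - m) ` (D - {m})"
    have "D' \<subseteq> {1..<n - m}"
      using m less.prems by (force simp: D'_def le_less)
    then obtain \<alpha>' where \<alpha>': "\<alpha>' \<in> compositions (n - m)" "comp_descents \<alpha>' = D'"
      using less.IH[of "n - m"] m_range by auto
    then have "\<alpha>' \<noteq> []" using m_range by (auto simp: compositions_def)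
    have "(+) m ` D' = D - {m}"
      using m(2) by (force simp: D'_def image_image)
    then have "comp_descents (m # \<alpha>') = D"
      using m(1) \<alpha>'(2) comp_descents_Cons[OF \<open>\<alpha>' \<noteq> []\<close>] by auto
    moreover have "m # \<alpha>' \<in> compositions n"
      using \<alpha>'(1) m_range by (auto simp: compositions_def)
    ultimately show ?thesis by blast
  qed
qed

lemma bij_betw_comp_descents: "bij_betw comp_descents (compositions n) (Pow {1..<n})"
  unfolding bij_betw_def
  using inj_on_comp_descents comp_descents_subset comp_descents_surj by blast

section \<open>Counting compositions by residue\<close>

lemma c_count_eq_card_desc_count:
  "c_count p i n = card {D \<in> Pow {1..<n}. [int (desc_count n D) = i] (mod int p)}"
proof -
  have "bij_betw comp_descents {\<alpha> \<in> compositions n. [int (ribbon \<alpha>) = i] (mod int p)}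
      {D \<in> Pow {1..<n}. [int (desc_count n D) = i] (mod int p)}"
    by (rule bij_betw_Collect[OF bij_betw_comp_descents]) (simp add: ribbon_eq_desc_count compositions_def)
  then show ?thesis unfolding c_count_def by (rule bij_betw_same_card)
qed

lemma desc_count_residue_cong:
  fixes p :: nat
  assumes "prime p" "odd p" "n = 2 * p ^ d + p ^ e" "D \<subseteq> {1..<n}"
  shows "[int (desc_count n D) = (-1) ^ card D * signed_ribbon_residue (p ^ d) (p ^ e) D] (mod int p)"
proof -
  have "int (desc_count n D) = (-1) ^ card D * ((-1) ^ card D * int (desc_count n D))"
    by (simp flip: mult.assoc power_add mult_2)
  also have "\<dots> = (-1) ^ card D * alt_multinomial_sum n D"
    using signed_desc_count_eq_alt_multinomial_sum[OF assms(4)] by simp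
  finally show ?thesis
    using alt_multinomial_sum_residue_cong[OF assms(1,2), of d e D] assms(3)
    by (simp add: cong_scalar_left)
qed

lemma c_count_eq_card_residue:
  fixes p :: nat
  assumes "prime p" "odd p" "n = 2 * p ^ d + p ^ e"
  shows "c_count p i n
    = card {D \<in> Pow {1..<n}. [(-1) ^ card D * signed_ribbon_residue (p ^ d) (p ^ e) D = i] (mod int p)}"
  unfolding c_count_eq_card_desc_count
  using desc_count_residue_cong[OF assms] by (metis (no_types, lifting) PowD cong_sym cong_trans)

lemma odd_prime_powers_distinct:
  fixes p :: nat
  assumes "prime p" "odd p" "d \<noteq> e"
  shows "0 < p ^ d" "0 < p ^ e" "p ^ d \<noteq> p ^ e" "p ^ e \<noteq> 2 * p ^ d"
proof -
  show "0 < p ^ d" "0 < p ^ e" using assms(1) by (simp_all add: prime_gt_0_nat)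
  show "p ^ d \<noteq> p ^ e"
    using assms(3) prime_gt_1_nat[OF assms(1)] by (simp add: power_inject_exp)
  have "odd (p ^ e)" using assms(2) by simp
  then show "p ^ e \<noteq> 2 * p ^ d" by (metis dvd_triv_left)
qed

lemma c_count_eq_sum_Pow_residue:
  fixes p d e n :: nat
  defines "G \<equiv> signed_ribbon_residue (p ^ d) (p ^ e)"
  assumes p: "prime p" "odd p" and "d \<noteq> e" and n: "n = 2 * p ^ d + p ^ e" and "5 < n"
  shows "c_count p i n = 2 ^ (n - 6) * (\<Sum>E\<in>Pow {p ^ d, 2 * p ^ d, p ^ e, p ^ d + p ^ e}.
    of_bool ([G E = i] (mod int p)) + of_bool ([- G E = i] (mod int p)))"
proof -
  define X where "X = {p ^ d, 2 * p ^ d, p ^ e, p ^ d + p ^ e}"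
  define Y where "Y = {1..<n} - X"
  note pq = odd_prime_powers_distinct[OF p \<open>d \<noteq> e\<close>]
  have "X \<subseteq> {1..<n}" using pq by (auto simp: X_def n)
  then have U: "{1..<n} = X \<union> Y" and "X \<inter> Y = {}" by (auto simp: Y_def)
  have "card X = 4" using pq by (simp add: X_def)
  then have "card Y = n - 5"
    using card_Diff_subset[OF _ \<open>X \<subseteq> {1..<n}\<close>] by (simp add: Y_def X_def)
  moreover have "finite Y" by (simp add: Y_def)
  ultimately have "Y \<noteq> {}" using \<open>5 < n\<close> by auto
  have "c_count p i n = card {D \<in> Pow (X \<union> Y). [(-1) ^ card D * G D = i] (mod int p)}"
    unfolding c_count_eq_card_residue[OF p n] U[symmetric] G_def ..
  also have "\<dots> = (\<Sum>E\<in>Pow X. card {R \<in> Pow Y. [(-1) ^ card (E \<union> R) * G (E \<union> R) = i] (mod int p)})"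
    using \<open>finite Y\<close> \<open>X \<inter> Y = {}\<close> by (intro card_Pow_Un_filter) (simp_all add: X_def)
  also have "\<dots> = (\<Sum>E\<in>Pow X. 2 ^ (n - 6) * (of_bool ([G E = i] (mod int p)) + of_bool ([- G E = i] (mod int p))))"
  proof (rule sum.cong[OF refl])
    fix E assume "E \<in> Pow X"
    then have "finite E" "E \<inter> Y = {}"
      using \<open>X \<inter> Y = {}\<close> by (auto simp: X_def intro: finite_subset)
    have "G (E \<union> R) = G E" if "R \<in> Pow Y" for R
      unfolding G_def using that \<open>X \<inter> Y = {}\<close> by (intro signed_ribbon_residue_cong) (auto simp: X_def)
    then have "card {R \<in> Pow Y. [(-1) ^ card (E \<union> R) * G (E \<union> R) = i] (mod int p)}
        = card {R \<in> Pow Y. [(-1) ^ card (E \<union> R) * G E = i] (mod int p)}"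
      by (simp cong: conj_cong)
    also have "\<dots> = 2 ^ (n - 6) * (of_bool ([G E = i] (mod int p)) + of_bool ([- G E = i] (mod int p)))"
      using card_Pow_sign_filter[OF \<open>finite Y\<close> \<open>Y \<noteq> {}\<close> \<open>finite E\<close> \<open>E \<inter> Y = {}\<close>] \<open>card Y = n - 5\<close>
      by simp
    finally show "card {R \<in> Pow Y. [(-1) ^ card (E \<union> R) * G (E \<union> R) = i] (mod int p)}
        = 2 ^ (n - 6) * (of_bool ([G E = i] (mod int p)) + of_bool ([- G E = i] (mod int p)))" .
  qed
  finally show ?thesis by (simp add: X_def sum_distrib_left)
qed

lemma c_count_formula:
  fixes p d e n :: nat
  assumes "prime p" "odd p" "d \<noteq> e" "n = 2 * p ^ d + p ^ e" "5 < n"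
  shows "c_count p i n = 2 ^ (n - 5) * (6 * of_bool ([i = 0] (mod int p))
      + 4 * (of_bool ([i = 1] (mod int p)) + of_bool ([i = -1] (mod int p)))
      + of_bool ([i = 2] (mod int p)) + of_bool ([i = -2] (mod int p)))"
proof -
  define h :: "int \<Rightarrow> nat" where "h g = of_bool ([g = i] (mod int p)) + of_bool ([- g = i] (mod int p))" for g
  have "c_count p i n
      = 2 ^ (n - 6) * (\<Sum>E\<in>Pow {p ^ d, 2 * p ^ d, p ^ e, p ^ d + p ^ e}. h (signed_ribbon_residue (p ^ d) (p ^ e) E))"
    unfolding h_def by (rule c_count_eq_sum_Pow_residue[OF assms])
  also have "\<dots> = 2 ^ (n - 6) * (6 * h 0 + 2 * h 1 + 6 * h (-1) + 2 * h (-2))"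
    by (simp only: sum_Pow_signed_ribbon_residue[OF odd_prime_powers_distinct[OF assms(1-3)]])
  also have "\<dots> = 2 ^ (n - 5) * (6 * of_bool ([i = 0] (mod int p))
      + 4 * (of_bool ([i = 1] (mod int p)) + of_bool ([i = -1] (mod int p)))
      + of_bool ([i = 2] (mod int p)) + of_bool ([i = -2] (mod int p)))"
  proof -
    have "n - 5 = Suc (n - 6)" using assms(5) by simp
    then show ?thesis by (simp add: h_def cong_sym_eq[of _ i] algebra_simps)
  qed
  finally show ?thesis .
qed

lemma c_count_3_5:
  "c_count 3 i 5 = (\<Sum>D\<in>Pow {1, 2, 3, 4}. of_bool ([(-1) ^ card D * signed_ribbon_residue 1 3 D = i] (mod 3)))"
proof -
  have "c_count 3 i 5 = card {D \<in> Pow {1..<5}. [(-1) ^ card D * signed_ribbon_residue 1 3 D = i] (mod 3)}"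
    using c_count_eq_card_residue[of 3 5 0 1 i] by simp
  also have "{1..<5::nat} = {1, 2, 3, 4}" by auto
  finally show ?thesis by (simp add: Int_def Pow_def)
qed

lemma c_count_3_5_values: "c_count 3 0 5 = 6" "c_count 3 1 5 = 8" "c_count 3 2 5 = 2"
  unfolding c_count_3_5
  by (simp_all del: sum_of_bool_eq add: sum_Pow_insert signed_ribbon_residue_def cong_def)

lemma cong_iff_eq_if_abs_diff_less:
  fixes a b m :: int
  assumes "\<bar>a - b\<bar> < m"
  shows "[a = b] (mod m) \<longleftrightarrow> a = b"
proof
  assume "[a = b] (mod m)"
  then have "m dvd a - b" by (simp add: cong_iff_dvd_diff)
  with assms show "a = b" using dvd_imp_le_int[of "a - b" m] by fastforce
qed simp

lemma five_less_double_power_add_power: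
  fixes p :: nat
  assumes "3 < p" "d \<noteq> e"
  shows "5 < 2 * p ^ d + p ^ e"
proof -
  have "d \<noteq> 0 \<or> e \<noteq> 0" using assms(2) by auto
  then have "p \<le> p ^ d \<or> p \<le> p ^ e" using assms(1) by (auto simp: self_le_power)
  moreover have "1 \<le> p ^ d" "1 \<le> p ^ e" using assms(1) by (simp_all add: one_le_power)
  ultimately show ?thesis using assms(1) by arith
qed

theorem corollary3p9:
  fixes p d e n :: nat
  assumes "prime p" and "odd p" and "d \<noteq> e" and "n = 2 * p ^ d + p ^ e"
  shows "(p = 3 \<and> n = 5 \<longrightarrow>
            c_count 3 0 5 = 6 \<and> c_count 3 1 5 = 8 \<and> c_count 3 2 5 = 2)
       \<and> (p = 3 \<and> n > 5 \<longrightarrow>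
            c_count 3 0 n = 6 * 2 ^ (n - 5) \<and>
            c_count 3 1 n = 5 * 2 ^ (n - 5) \<and>
            c_count 3 (-1) n = 5 * 2 ^ (n - 5))
       \<and> (p > 3 \<longrightarrow>
            c_count p 0 n = 6 * 2 ^ (n - 5) \<and>
            c_count p 1 n = 4 * 2 ^ (n - 5) \<and>
            c_count p (-1) n = 4 * 2 ^ (n - 5) \<and>
            c_count p 2 n = 2 ^ (n - 5) \<and>
            c_count p (-2) n = 2 ^ (n - 5) \<and>
            (\<forall>i::int. \<not> [i = 0] (mod int p) \<and> \<not> [i = 1] (mod int p) \<and>
                \<not> [i = -1] (mod int p) \<and> \<not> [i = 2] (mod int p) \<and>
                \<not> [i = -2] (mod int p) \<longrightarrow> c_count p i n = 0))"
proof (intro conjI impI)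
  show "c_count 3 0 5 = 6" "c_count 3 1 5 = 8" "c_count 3 2 5 = 2"
    by (fact c_count_3_5_values)+
next
  assume "p = 3 \<and> n > 5"
  then have "c_count 3 i n = 2 ^ (n - 5) * (6 * of_bool ([i = 0] (mod 3))
      + 4 * (of_bool ([i = 1] (mod 3)) + of_bool ([i = -1] (mod 3)))
      + of_bool ([i = 2] (mod 3)) + of_bool ([i = -2] (mod 3)))" for i
    using c_count_formula[OF assms] by simp
  then show "c_count 3 0 n = 6 * 2 ^ (n - 5)" "c_count 3 1 n = 5 * 2 ^ (n - 5)"
    "c_count 3 (-1) n = 5 * 2 ^ (n - 5)"
    by (simp_all add: cong_def)
next
  assume "p > 3"
  then have "4 < int p" using \<open>odd p\<close> by (cases "p = 4") auto
  note count = c_count_formula[OF assms five_less_double_power_add_power[OF \<open>p > 3\<close> \<open>d \<noteq> e\<close>, folded assms(4)]]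
  show "c_count p 0 n = 6 * 2 ^ (n - 5)" "c_count p 1 n = 4 * 2 ^ (n - 5)"
    "c_count p (-1) n = 4 * 2 ^ (n - 5)" "c_count p 2 n = 2 ^ (n - 5)" "c_count p (-2) n = 2 ^ (n - 5)"
    using \<open>4 < int p\<close> by (simp_all add: count cong_iff_eq_if_abs_diff_less)
  show "\<forall>i::int. \<not> [i = 0] (mod int p) \<and> \<not> [i = 1] (mod int p) \<and>
      \<not> [i = -1] (mod int p) \<and> \<not> [i = 2] (mod int p) \<and>
      \<not> [i = -2] (mod int p) \<longrightarrow> c_count p i n = 0"
    by (simp add: count)
qed

end
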